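(* Let $\alpha\in(0,1)$ and let $(\eta_t)_{t\ge1}$, $(\gamma_t)_{t\ge1}$ be non-increasing sequences of positive learning rates and exploration factors with $\eta_t\le2\gamma_t$. With probability at least $1-\delta$, FTARL with the $\alpha$-Tsallis entropy regularizer guarantees $$\max_{a\in[K]}\mathrm{Regret}(a)\le\frac{K^{1-\alpha}-1}{\eta_T(1-\alpha)}+\frac{\ln(3K/\delta)}{2\gamma_T}+\Big(\frac1{2\alpha}+\frac12\Big)\ln(3/\delta)+\sum_{t=1}^T\Big(\frac{\eta_t}{2\alpha}+\gamma_t\Big)A_t.$$
   Context: Sleeping bandits with $K\ge2$ arms: in round $t$ an adaptive adversary reveals $\mathbb A_t\subseteq[K]$ ($A_t=|\mathbb A_t|$) and selects losses $\ell_{i,t}\in[0,1]$; the learner pulls $i_t\in\mathbb A_t$ and observes $\hat\ell_t=\ell_{i_t,t}$. With $I_{i,t}=\mathbb 1\{i\in\mathbb A_t\}$, $\mathrm{Regret}(a)=\sum_{t=1}^TI_{a,t}(\ell_{i_t,t}-\ell_{a,t})$. FTARL: $\psi(x)=\frac{1-\sum_{i=1}^Kx_i^\alpha}{1-\alpha}$, $\psi_t(q)=\frac{\psi(q)-\min_{v\in\Delta_K}\psi(v)}{\eta_t}$, $\Delta_K$ the probability simplex; $\tilde L_{i,0}=0$; in round $t$, $q_t=\arg\min_{q\in\Delta_K}\psi_t(q)+\langle q,\tilde L_{t-1}\rangle$, $p_{i,t}=\frac{I_{i,t}q_{i,t}}{\sum_jI_{j,t}q_{j,t}}$, draw $i_t\sim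 p_t$; $\tilde\ell_{i,t}=\frac{\mathbb 1\{i_t=i\}\hat\ell_t}{p_{i,t}+\gamma_t}$ for active $i$, $\tilde\ell_{i,t}=\hat\ell_t-\gamma_t\sum_{j\in\mathbb A_t}\tilde\ell_{j,t}$ for inactive $i$; $\tilde L_{i,t}=\tilde L_{i,t-1}+\tilde\ell_{i,t}$. *)

theory Defs
  imports Complex_Main
begin

text \<open>Arms are 0,...,K-1. Rounds are 1-based: eta t, gamma t for t >= 1.
  Histories of pulled arms are stored in REVERSE order (most recent first);
  a history h of length t-1 is the information available before round t.
  The adaptive adversary is given by Act h (active set of round t) and
  loss h i (loss of arm i in round t), both functions of the past pulls h.\<close>

definition simplex :: "nat \<Rightarrow> (nat \<Rightarrow> real) set" where
  "simplex K = {q. (\<forall>i. 0 \<le> q i) \<and> (\<forall>i. K \<le> i \<longrightarrow> q i = 0) \<and> (\<Sum>i<K. q i) = 1}"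

definition tsallis :: "real \<Rightarrow> nat \<Rightarrow> (nat \<Rightarrow> real) \<Rightarrow> real" where
  "tsallis \<alpha> K x = (1 - (\<Sum>i<K. x i powr \<alpha>)) / (1 - \<alpha>)"

definition reg :: "real \<Rightarrow> nat \<Rightarrow> real \<Rightarrow> (nat \<Rightarrow> real) \<Rightarrow> real" where
  "reg \<alpha> K \<eta> q = (tsallis \<alpha> K q - (INF v\<in>simplex K. tsallis \<alpha> K v)) / \<eta>"

definition ftarl_q :: "real \<Rightarrow> nat \<Rightarrow> real \<Rightarrow> (nat \<Rightarrow> real) \<Rightarrow> (nat \<Rightarrow> real)" where
  "ftarl_q \<alpha> K \<eta> L = (SOME q. q \<in> simplex K \<and>
     (\<forall>v\<in>simplex K. reg \<alpha> K \<eta> q + (\<Sum>i<K. q i * L i) \<le> reg \<alpha> K \<eta> v + (\<Sum>i<K. v i * L i)))"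

definition ftarl_p :: "nat set \<Rightarrow> (nat \<Rightarrow> real) \<Rightarrow> nat \<Rightarrow> real" where
  "ftarl_p A q i = (if i \<in> A then q i else 0) / (\<Sum>j\<in>A. q j)"

definition ltil_act :: "(nat \<Rightarrow> real) \<Rightarrow> real \<Rightarrow> nat \<Rightarrow> real \<Rightarrow> nat \<Rightarrow> real" where
  "ltil_act p \<gamma> i0 lhat i = (if i = i0 then lhat / (p i + \<gamma>) else 0)"

definition ltil :: "(nat \<Rightarrow> real) \<Rightarrow> real \<Rightarrow> nat set \<Rightarrow> nat \<Rightarrow> real \<Rightarrow> nat \<Rightarrow> real" where
  "ltil p \<gamma> A i0 lhat i = (if i \<in> A then ltil_act p \<gamma> i0 lhat i
      else lhat - \<gamma> * (\<Sum>j\<in>A. ltil_act p \<gamma> i0 lhat j))"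

definition round_p :: "real \<Rightarrow> nat \<Rightarrow> (nat \<Rightarrow> real) \<Rightarrow> (nat list \<Rightarrow> nat set) \<Rightarrow> nat list
     \<Rightarrow> (nat \<Rightarrow> real) \<Rightarrow> nat \<Rightarrow> real" where
  "round_p \<alpha> K eta Act h L = ftarl_p (Act h) (ftarl_q \<alpha> K (eta (Suc (length h))) L)"

primrec Lcum :: "real \<Rightarrow> nat \<Rightarrow> (nat \<Rightarrow> real) \<Rightarrow> (nat \<Rightarrow> real) \<Rightarrow> (nat list \<Rightarrow> nat set)
     \<Rightarrow> (nat list \<Rightarrow> nat \<Rightarrow> real) \<Rightarrow> nat list \<Rightarrow> nat \<Rightarrow> real" where
  "Lcum \<alpha> K eta gamma Act loss [] = (\<lambda>i. 0)"
| "Lcum \<alpha> K eta gamma Act loss (j # h) =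
     (let L = Lcum \<alpha> K eta gamma Act loss h;
          p = round_p \<alpha> K eta Act h L;
          t = Suc (length h)
      in (\<lambda>i. L i + ltil p (gamma t) (Act h) j (loss h j) i))"

definition prob_arm :: "real \<Rightarrow> nat \<Rightarrow> (nat \<Rightarrow> real) \<Rightarrow> (nat \<Rightarrow> real) \<Rightarrow> (nat list \<Rightarrow> nat set)
     \<Rightarrow> (nat list \<Rightarrow> nat \<Rightarrow> real) \<Rightarrow> nat list \<Rightarrow> nat \<Rightarrow> real" where
  "prob_arm \<alpha> K eta gamma Act loss h = round_p \<alpha> K eta Act h (Lcum \<alpha> K eta gamma Act loss h)"

primrec ftarl_weight :: "real \<Rightarrow> nat \<Rightarrow> (nat \<Rightarrow> real) \<Rightarrow> (nat \<Rightarrow> real) \<Rightarrow> (nat list \<Rightarrow> nat set)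
     \<Rightarrow> (nat list \<Rightarrow> nat \<Rightarrow> real) \<Rightarrow> nat list \<Rightarrow> real" where
  "ftarl_weight \<alpha> K eta gamma Act loss [] = 1"
| "ftarl_weight \<alpha> K eta gamma Act loss (j # h) =
     ftarl_weight \<alpha> K eta gamma Act loss h * prob_arm \<alpha> K eta gamma Act loss h j"

definition hist_prob :: "nat \<Rightarrow> nat \<Rightarrow> (nat list \<Rightarrow> real) \<Rightarrow> (nat list \<Rightarrow> bool) \<Rightarrow> real" where
  "hist_prob K T w P = (\<Sum>H\<in>{H. length H = T \<and> set H \<subseteq> {..<K}}. w H * (if P H then 1 else 0))"

primrec regret :: "(nat list \<Rightarrow> nat set) \<Rightarrow> (nat list \<Rightarrow> nat \<Rightarrow> real) \<Rightarrow> nat \<Rightarrow> nat list \<Rightarrow> real" where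
  "regret Act loss a [] = 0"
| "regret Act loss a (j # h) = regret Act loss a h + (if a \<in> Act h then loss h j - loss h a else 0)"

primrec bonus :: "real \<Rightarrow> (nat \<Rightarrow> real) \<Rightarrow> (nat \<Rightarrow> real) \<Rightarrow> (nat list \<Rightarrow> nat set) \<Rightarrow> nat list \<Rightarrow> real" where
  "bonus \<alpha> eta gamma Act [] = 0"
| "bonus \<alpha> eta gamma Act (j # h) = bonus \<alpha> eta gamma Act h
     + (eta (Suc (length h)) / (2 * \<alpha>) + gamma (Suc (length h))) * real (card (Act h))"

end

theory Submission
  imports Defs "HOL-Analysis.Convex"
begin

text \<open>FTARL is analysed as follow-the-regularised-leader on the estimates \<open>ltil\<close>. Its
  minimiser is interior, so a three-point identity for the Bregman divergence of the Tsallis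
  potential bounds the cumulative linear loss \<open>\<Sum>t. \<langle>q_t, ltil_t\<rangle>\<close> against any arm \<open>b\<close> by the range
  \<open>(K powr (1 - \<alpha>) - 1) / (\<eta>_T * (1 - \<alpha>))\<close> of the regulariser plus stability terms
  \<open>\<eta>_t / (2 * \<alpha>) * \<Sum>i. q_i powr (2 - \<alpha>) * ltil_i^2\<close>. The estimates of the inactive arms are
  chosen so that \<open>\<langle>q_t, ltil_t\<rangle>\<close> is the loss of the pulled arm minus the exploration bias
  \<open>\<gamma>_t * \<Sum>j \<in> A_t. ltil_j\<close>. What is left to control (the stability terms, the bias and the
  estimate of the comparator) are all sums \<open>\<Sum>i \<in> A_t. w_i * (ltil_i - l_i)\<close> with weights
  \<open>0 \<le> w_i \<le> 2 * \<gamma>_t\<close>. For those, Neu's implicit-exploration inequality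
  \<open>exp (w * l / (p + \<gamma>)) \<le> 1 + w * l / p\<close> makes the exponential of the running sum a
  supermartingale, so by Markov's inequality it exceeds \<open>ln (3 / \<delta>)\<close> (or \<open>ln (3 * K / \<delta>)\<close> for the
  \<open>K\<close> comparators) with probability at most \<open>\<delta> / 3\<close> (or \<open>\<delta> / (3 * K)\<close>), and a union bound
  over these \<open>K + 2\<close> events gives the theorem.\<close>

section \<open>Scalar inequalities\<close>

lemma powr_le_bernoulli:
  fixes t b :: real
  assumes "0 \<le> t" "0 < b" "b < 1"
  shows "t powr b \<le> 1 + b * (t - 1)"
proof (cases "t = 0")
  case True
  then show ?thesis using assms by simp
next
  case False
  then have "t powr b * 1 powr (1 - b) \<le> b * t + (1 - b) * 1"
    using assms by (intro Youngs_inequality_0) auto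
  then show ?thesis by (simp add: algebra_simps)
qed

lemma one_plus_le_powr_neg:
  fixes s a :: real
  assumes "0 < s" "s \<le> 1" "0 < a" "a < 1"
  shows "1 + (1 - a) * (1 - s) \<le> s powr (a - 1)"
proof -
  define z where "z = (1 - a) * (1 - s)"
  have "(1 - a) * (1 - s) \<le> 1 - a"
    using assms mult_left_mono[of "1 - s" 1 "1 - a"] by simp
  then have "z < 1"
    using assms unfolding z_def by linarith
  have "0 \<le> z"
    using assms unfolding z_def by simp
  have "s powr (1 - a) \<le> 1 - z"
    using powr_le_bernoulli[of s "1 - a"] assms unfolding z_def by (simp add: algebra_simps)
  then have "1 / (1 - z) \<le> 1 / s powr (1 - a)"
    using assms \<open>z < 1\<close> by (intro divide_left_mono) auto
  also have "\<dots> = s powr (a - 1)"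
    using assms by (simp add: powr_minus_divide[symmetric] powr_minus)
  finally have "1 / (1 - z) \<le> s powr (a - 1)" .
  moreover have "1 + z \<le> 1 / (1 - z)"
    using \<open>0 \<le> z\<close> \<open>z < 1\<close> by (simp add: le_divide_eq algebra_simps)
  ultimately show ?thesis unfolding z_def by linarith
qed

lemma powr_concavity_gap_ge:
  fixes t a :: real
  assumes "0 \<le> t" "t \<le> 1" "0 < a" "a < 1"
  shows "a * (1 - a) * (1 - t)^2 / 2 \<le> 1 - t powr a - a * (1 - t)"
proof (cases "t = 0")
  case True
  have "(1 - a) * (a / 2) \<le> (1 - a) * 1"
    using assms by (intro mult_left_mono) auto
  then show ?thesis using True by (simp add: algebra_simps)
next
  case False
  define G where "G s = 1 - s powr a - a * (1 - s) - a * (1 - a) * (1 - s)^2 / 2" for s :: real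
  have "G 1 \<le> G t"
  proof (rule DERIV_nonpos_imp_nonincreasing[OF \<open>t \<le> 1\<close>])
    fix s assume s: "t \<le> s" "s \<le> 1"
    then have "0 < s" using assms False by simp
    have "DERIV G s :> a * (1 + (1 - a) * (1 - s)) - a * s powr (a - 1)"
      unfolding G_def using \<open>0 < s\<close>
      by (auto intro!: derivative_eq_intros simp: power2_eq_square) (simp add: field_simps)
    moreover have "a * (1 + (1 - a) * (1 - s)) \<le> a * s powr (a - 1)"
      using one_plus_le_powr_neg[OF \<open>0 < s\<close> s(2) assms(3,4)] assms by simp
    ultimately show "\<exists>y. DERIV G s :> y \<and> y \<le> 0" by auto
  qed
  then show ?thesis unfolding G_def by simp
qed

lemma ln_one_plus_ge_pade:
  fixes x :: real
  assumes "0 \<le> x"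
  shows "2 * x / (2 + x) \<le> ln (1 + x)"
proof -
  define g where "g x = ln (1 + x) - 2 * x / (2 + x)" for x :: real
  have "g 0 \<le> g x"
  proof (rule DERIV_nonneg_imp_nondecreasing[OF assms])
    fix s :: real assume s: "0 \<le> s" "s \<le> x"
    have "4 * (1 + s) \<le> (2 + s)^2"
      by (simp add: power2_eq_square algebra_simps)
    then have "4 / (2 + s)^2 \<le> 1 / (1 + s)"
      using s by (simp add: divide_simps)
    moreover have "DERIV g s :> 1 / (1 + s) - 4 / (2 + s)^2"
      unfolding g_def using s
      by (auto intro!: derivative_eq_intros simp: field_simps power2_eq_square)
    ultimately show "\<exists>y. DERIV g s :> y \<and> y \<ge> 0" by force
  qed
  then show ?thesis unfolding g_def by simp
qed

text \<open>The implicit-exploration inequality of Neu (2015): adding \<open>g\<close> to the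
  denominator of an importance weight buys an exponential moment.\<close>

lemma exp_implicit_exploration_le:
  fixes p g w l :: real
  assumes "0 < p" "0 < g" "0 \<le> w" "w \<le> 2 * g" "0 \<le> l" "l \<le> 1"
  shows "exp (w * l / (p + g)) \<le> 1 + w * l / p"
proof -
  define x where "x = w * l / p"
  have "0 \<le> x" unfolding x_def using assms by simp
  have "w * l \<le> 2 * g"
    using assms mult_left_mono[of l 1 w] by linarith
  then have "w * l / (p + g) \<le> w * l / (p + w * l / 2)"
    using assms by (intro divide_left_mono) (auto intro!: mult_pos_pos add_pos_nonneg)
  also have "\<dots> = 2 * x / (2 + x)"
    unfolding x_def using assms by (simp add: field_simps)
  also have "\<dots> \<le> ln (1 + x)"
    using ln_one_plus_ge_pade[OF \<open>0 \<le> x\<close>] .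
  finally have "exp (w * l / (p + g)) \<le> exp (ln (1 + x))"
    by simp
  then show ?thesis
    using \<open>0 \<le> x\<close> unfolding x_def by simp
qed

section \<open>Follow-the-regularised-leader with the Tsallis entropy\<close>

text \<open>The Bregman divergence \<open>D(y, x)\<close> of the potential \<open>u \<mapsto> - u powr a / ((1 - a) * \<eta>)\<close>;
  summed over the coordinates it is the Bregman divergence of \<open>reg a K \<eta>\<close>.\<close>

definition tsallis_breg :: "real \<Rightarrow> real \<Rightarrow> real \<Rightarrow> real \<Rightarrow> real" where
  "tsallis_breg a \<eta> y x = (x powr a - y powr a + a * x powr (a - 1) * (y - x)) / ((1 - a) * \<eta>)"

lemma tsallis_breg_numerator_eq:
  fixes a x y :: real
  assumes "0 < x" "0 \<le> y"
  shows "x powr a - y powr a + a * x powr (a - 1) * (y - x)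
     = x powr a * (1 - (y / x) powr a - a * (1 - y / x))"
proof -
  have "(y / x) powr a = y powr a / x powr a" "x powr (a - 1) = x powr a / x"
    using assms by (simp_all add: powr_divide powr_diff)
  then show ?thesis using assms by (simp add: field_simps)
qed

lemma tsallis_breg_nonneg:
  assumes "0 < x" "0 \<le> y" "0 < a" "a < 1" "0 < \<eta>"
  shows "0 \<le> tsallis_breg a \<eta> y x"
proof -
  have "0 \<le> 1 - (y / x) powr a - a * (1 - y / x)"
    using powr_le_bernoulli[of "y / x" a] assms by (simp add: algebra_simps)
  then show ?thesis
    unfolding tsallis_breg_def tsallis_breg_numerator_eq[OF assms(1,2)] using assms by simp
qed

lemma tsallis_breg_ge_quadratic:
  assumes "0 < x" "0 \<le> y" "y \<le> x" "0 < a" "a < 1" "0 < \<eta>"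
  shows "a * x powr (a - 2) * (x - y)^2 / (2 * \<eta>) \<le> tsallis_breg a \<eta> y x"
proof -
  have "x powr a = x powr (a - 2) * x^2" "(1 - y / x)^2 = (x - y)^2 / x^2"
    using assms by (simp_all add: powr_diff power2_eq_square field_simps)
  then have "(1 - a) * (a * x powr (a - 2) * (x - y)^2 / 2)
      = x powr a * (a * (1 - a) * (1 - y / x)^2 / 2)"
    using assms by (simp add: field_simps)
  also have "\<dots> \<le> x powr a * (1 - (y / x) powr a - a * (1 - y / x))"
    using powr_concavity_gap_ge[of "y / x" a] assms by (intro mult_left_mono) auto
  finally have "(1 - a) * (a * x powr (a - 2) * (x - y)^2 / 2) / ((1 - a) * \<eta>)
      \<le> x powr a * (1 - (y / x) powr a - a * (1 - y / x)) / ((1 - a) * \<eta>)"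
    using assms by (intro divide_right_mono) auto
  moreover have "(1 - a) * (a * x powr (a - 2) * (x - y)^2 / 2) / ((1 - a) * \<eta>)
      = a * x powr (a - 2) * (x - y)^2 / (2 * \<eta>)"
    using assms by (simp add: field_simps)
  ultimately show ?thesis
    unfolding tsallis_breg_def tsallis_breg_numerator_eq[OF assms(1,2)] by simp
qed

lemma tsallis_breg_pos:
  assumes "0 < x" "0 \<le> y" "y < x" "0 < a" "a < 1" "0 < \<eta>"
  shows "0 < tsallis_breg a \<eta> y x"
  using tsallis_breg_ge_quadratic[of x y a \<eta>] assms
  by (smt (verit) divide_pos_pos mult_pos_pos powr_gt_zero zero_less_power)

text \<open>Completing the square against the quadratic lower bound of the divergence.\<close>

lemma tsallis_breg_stability:
  assumes "0 < x" "0 \<le> y" "0 \<le> l" "0 < a" "a < 1" "0 < \<eta>"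
  shows "(x - y) * l - tsallis_breg a \<eta> y x \<le> \<eta> * x powr (2 - a) * l^2 / (2 * a)"
proof (cases "y \<le> x")
  case True
  define m where "m = a * x powr (a - 2) / \<eta>"
  have "0 < m" unfolding m_def using assms by simp
  have "(x - y) * l - tsallis_breg a \<eta> y x \<le> (x - y) * l - m * (x - y)^2 / 2"
    using tsallis_breg_ge_quadratic[OF assms(1,2) True assms(4-6)] unfolding m_def by simp
  also have "\<dots> \<le> l^2 / (2 * m)"
  proof -
    have "2 * m * ((x - y) * l) - m * (m * (x - y)^2) \<le> l^2"
      using zero_le_power2[of "l - m * (x - y)"] by (simp add: power2_eq_square algebra_simps)
    then show ?thesis using \<open>0 < m\<close> by (simp add: field_simps power2_eq_square)
  qed
  also have "l^2 / (2 * m) = \<eta> * x powr (2 - a) * l^2 / (2 * a)"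
  proof -
    have "x powr (2 - a) * x powr (a - 2) = 1" using assms by (simp flip: powr_add)
    then show ?thesis unfolding m_def using assms by (simp add: field_simps)
  qed
  finally show ?thesis .
next
  case False
  then have "(x - y) * l \<le> 0" using assms by (simp add: mult_nonpos_nonneg)
  moreover have "0 \<le> tsallis_breg a \<eta> y x" using tsallis_breg_nonneg assms by simp
  ultimately show ?thesis using assms by (smt (verit) divide_nonneg_pos mult_nonneg_nonneg
      powr_ge_zero zero_le_power2)
qed

lemma simplexD:
  assumes "y \<in> simplex K"
  shows "0 \<le> y i" "K \<le> i \<Longrightarrow> y i = 0" "(\<Sum>i<K. y i) = 1"
  using assms unfolding simplex_def by auto

lemma simplex_le_one:
  assumes "y \<in> simplex K"
  shows "y i \<le> 1"
proof (cases "i < K")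
  case True
  then have "y i \<le> (\<Sum>j<K. y j)"
    using simplexD(1)[OF assms] by (intro member_le_sum) auto
  then show ?thesis using simplexD(3)[OF assms] by simp
qed (use simplexD(2)[OF assms] in simp)

lemma vertex_in_simplex:
  assumes "b < K"
  shows "(\<lambda>i. if i = b then 1 else 0) \<in> simplex K"
  unfolding simplex_def using assms by auto

definition ftrl_obj :: "real \<Rightarrow> nat \<Rightarrow> real \<Rightarrow> (nat \<Rightarrow> real) \<Rightarrow> (nat \<Rightarrow> real) \<Rightarrow> real" where
  "ftrl_obj a K \<eta> L y = reg a K \<eta> y + (\<Sum>i<K. y i * L i)"

text \<open>The gradient of the Tsallis entropy blows up at the boundary,
  so the optimum is interior and no multipliers for \<open>x i \<ge> 0\<close> are needed.\<close>

definition kkt_point :: "real \<Rightarrow> nat \<Rightarrow> real \<Rightarrow> (nat \<Rightarrow> real) \<Rightarrow> (nat \<Rightarrow> real) \<Rightarrow> real \<Rightarrow> bool" where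
  "kkt_point a K \<eta> L x lam \<longleftrightarrow> x \<in> simplex K \<and>
     (\<forall>i<K. 0 < x i \<and> a / ((1 - a) * \<eta>) * x i powr (a - 1) = L i + lam)"

locale tsallis_simplex =
  fixes a :: real and K :: nat
  assumes a_pos: "0 < a" and a_less_one: "a < 1" and K_pos: "1 \<le> K"
begin

lemma sum_powr_le:
  assumes "y \<in> simplex K"
  shows "(\<Sum>i<K. y i powr a) \<le> real K powr (1 - a)"
proof -
  have "0 < real K" using K_pos by simp
  have "(\<Sum>i<K. (real K * y i) powr a) \<le> (\<Sum>i<K. 1 + a * (real K * y i - 1))"
    using powr_le_bernoulli[of _ a] simplexD(1)[OF assms] a_pos a_less_one \<open>0 < real K\<close>
    by (intro sum_mono) simp
  also have "\<dots> = real K"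
    using simplexD(3)[OF assms]
    by (simp add: sum.distrib sum_subtractf sum_distrib_left[symmetric] algebra_simps)
  finally have "real K powr a * (\<Sum>i<K. y i powr a) \<le> real K"
    using simplexD(1)[OF assms] \<open>0 < real K\<close> by (simp add: powr_mult sum_distrib_left)
  then have "(\<Sum>i<K. y i powr a) \<le> real K / real K powr a"
    using \<open>0 < real K\<close> by (simp add: field_simps)
  also have "\<dots> = real K powr (1 - a)"
    using \<open>0 < real K\<close> by (simp add: powr_diff)
  finally show ?thesis .
qed

lemma tsallis_ge:
  assumes "y \<in> simplex K"
  shows "(1 - real K powr (1 - a)) / (1 - a) \<le> tsallis a K y"
  unfolding tsallis_def using sum_powr_le[OF assms] a_less_one by (intro divide_right_mono) auto

lemma tsallis_INF_ge: "(1 - real K powr (1 - a)) / (1 - a) \<le> (INF v\<in>simplex K. tsallis a K v)"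
  using vertex_in_simplex[of 0 K] K_pos tsallis_ge by (intro cINF_greatest) auto

lemma tsallis_INF_le:
  assumes "y \<in> simplex K"
  shows "(INF v\<in>simplex K. tsallis a K v) \<le> tsallis a K y"
  using tsallis_ge assms by (intro cINF_lower) (auto intro!: bdd_belowI2)

lemma reg_nonneg:
  assumes "y \<in> simplex K" "0 < \<eta>"
  shows "0 \<le> reg a K \<eta> y"
  unfolding reg_def using tsallis_INF_le[OF assms(1)] assms(2) by simp

lemma reg_antimono:
  assumes "y \<in> simplex K" "0 < \<eta>'" "\<eta>' \<le> \<eta>"
  shows "reg a K \<eta> y \<le> reg a K \<eta>' y"
  unfolding reg_def using tsallis_INF_le[OF assms(1)] assms(2,3) by (intro divide_left_mono) auto

lemma reg_vertex_le:
  assumes "b < K" "0 < \<eta>"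
  shows "reg a K \<eta> (\<lambda>i. if i = b then 1 else 0) \<le> (real K powr (1 - a) - 1) / (\<eta> * (1 - a))"
proof -
  have "(\<Sum>i<K. (if i = b then 1 else 0 :: real) powr a) = 1"
    using assms(1) by (simp add: if_distrib[of "\<lambda>u. u powr a"] cong: if_cong)
  then have "reg a K \<eta> (\<lambda>i. if i = b then 1 else 0) = - (INF v\<in>simplex K. tsallis a K v) / \<eta>"
    unfolding reg_def tsallis_def by simp
  also have "\<dots> \<le> - ((1 - real K powr (1 - a)) / (1 - a)) / \<eta>"
    using tsallis_INF_ge assms(2) by (intro divide_right_mono) auto
  also have "\<dots> = (real K powr (1 - a) - 1) / (\<eta> * (1 - a))"
    using a_less_one assms(2) by (simp add: field_simps)
  finally show ?thesis .
qed

lemma ftrl_obj_diff_eq_breg: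
  assumes x: "kkt_point a K \<eta> L x lam" and y: "y \<in> simplex K" and "0 < \<eta>"
  shows "ftrl_obj a K \<eta> L y - ftrl_obj a K \<eta> L x = (\<Sum>i<K. tsallis_breg a \<eta> (y i) (x i))"
proof -
  have "x \<in> simplex K"
    and grad: "\<And>i. i < K \<Longrightarrow> a / ((1 - a) * \<eta>) * x i powr (a - 1) = L i + lam"
    using x unfolding kkt_point_def by auto
  have "(\<Sum>i<K. tsallis_breg a \<eta> (y i) (x i)) =
     (\<Sum>i<K. (x i powr a - y i powr a) / ((1 - a) * \<eta>) + (L i + lam) * (y i - x i))"
    unfolding tsallis_breg_def by (intro sum.cong refl) (simp add: add_divide_distrib flip: grad)
  also have "\<dots> = ((\<Sum>i<K. x i powr a) - (\<Sum>i<K. y i powr a)) / ((1 - a) * \<eta>)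
      + ((\<Sum>i<K. y i * L i) - (\<Sum>i<K. x i * L i)) + lam * ((\<Sum>i<K. y i) - (\<Sum>i<K. x i))"
    by (simp add: sum.distrib sum_subtractf sum_divide_distrib[symmetric]
        sum_distrib_left[symmetric] algebra_simps)
  also have "\<dots> = ftrl_obj a K \<eta> L y - ftrl_obj a K \<eta> L x"
  proof -
    have "tsallis a K y - tsallis a K x = ((\<Sum>i<K. x i powr a) - (\<Sum>i<K. y i powr a)) / (1 - a)"
      unfolding tsallis_def by (simp add: diff_divide_distrib[symmetric])
    then have "reg a K \<eta> y - reg a K \<eta> x
        = ((\<Sum>i<K. x i powr a) - (\<Sum>i<K. y i powr a)) / ((1 - a) * \<eta>)"
      unfolding reg_def by (simp add: diff_divide_distrib[symmetric] mult.commute)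
    then show ?thesis
      using simplexD(3)[OF \<open>x \<in> simplex K\<close>] simplexD(3)[OF y] unfolding ftrl_obj_def by simp
  qed
  finally show ?thesis by simp
qed

lemma kkt_point_minimises:
  assumes "kkt_point a K \<eta> L x lam" "0 < \<eta>" "y \<in> simplex K"
  shows "ftrl_obj a K \<eta> L x \<le> ftrl_obj a K \<eta> L y"
proof -
  have "0 \<le> (\<Sum>i<K. tsallis_breg a \<eta> (y i) (x i))"
    using assms a_pos a_less_one simplexD(1)[OF assms(3)] unfolding kkt_point_def
    by (intro sum_nonneg tsallis_breg_nonneg) auto
  then show ?thesis using ftrl_obj_diff_eq_breg[OF assms(1,3,2)] by simp
qed

lemma kkt_mass_le_one:
  assumes "0 < c" "\<And>i. i < K \<Longrightarrow> c * real K powr (1 - a) \<le> L i + lam"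
  shows "(\<Sum>i<K. (c / (L i + lam)) powr (1 / (1 - a))) \<le> 1"
proof -
  have "(c / (L i + lam)) powr (1 / (1 - a)) \<le> 1 / real K" if "i < K" for i
  proof -
    have "0 < c * real K powr (1 - a)"
      using assms(1) K_pos by simp
    moreover have "c * real K powr (1 - a) \<le> L i + lam"
      using assms(2)[OF that] .
    ultimately have "c / (L i + lam) \<le> c / (c * real K powr (1 - a))"
      using assms(1) by (intro divide_left_mono) auto
    then have "c / (L i + lam) \<le> 1 / real K powr (1 - a)"
      using assms(1) by simp
    moreover have "0 < L i + lam"
      using \<open>0 < c * real K powr (1 - a)\<close> assms(2)[OF that] by linarith
    ultimately have "(c / (L i + lam)) powr (1 / (1 - a)) \<le> (1 / real K powr (1 - a)) powr (1 / (1 - a))"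
      using assms(1) a_less_one by (intro powr_mono2) auto
    also have "\<dots> = 1 / real K"
      using K_pos a_less_one by (simp add: powr_divide powr_powr)
    finally show ?thesis .
  qed
  then have "(\<Sum>i<K. (c / (L i + lam)) powr (1 / (1 - a))) \<le> (\<Sum>i<K. 1 / real K)"
    by (intro sum_mono) auto
  then show ?thesis
    using K_pos by simp
qed

text \<open>The multiplier is found by the intermediate value theorem: the total mass
  \<open>\<Sum>i<K. (c / (L i + lam)) powr (1 / (1 - a))\<close> is continuous in \<open>lam\<close>,
  at least \<open>1\<close> when \<open>lam = c - Min L\<close> and at most \<open>1\<close> when \<open>lam = c * K powr (1 - a) - Min L\<close>.\<close>

lemma kkt_multiplier_exists:
  assumes "0 < c"
  shows "\<exists>lam. (\<forall>i<K. c \<le> L i + lam) \<and> (\<Sum>i<K. (c / (L i + lam)) powr (1 / (1 - a))) = 1"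
proof -
  define r where "r = 1 / (1 - a)"
  define g where "g lam = (\<Sum>i<K. (c / (L i + lam)) powr r)" for lam
  define m where "m = Min (L ` {..<K})"
  have "m \<in> L ` {..<K}"
    unfolding m_def using K_pos by (intro Min_in) (auto simp: lessThan_empty_iff)
  then obtain b where b: "b < K" "L b = m"
    by auto
  have m_le: "i < K \<Longrightarrow> m \<le> L i" for i unfolding m_def by simp
  define l0 where "l0 = c - m"
  define l1 where "l1 = c * real K powr (1 - a) - m"
  have K_powr: "1 \<le> real K powr (1 - a)"
    using K_pos a_less_one by (simp add: ge_one_powr_ge_zero)
  then have "l0 \<le> l1" unfolding l0_def l1_def using assms by simp
  have c_le: "c \<le> L i + lam" if "i < K" "l0 \<le> lam" for i lam
    using m_le[OF that(1)] that(2) unfolding l0_def by simp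
  have "continuous_on {l0..l1} g"
    unfolding g_def
  proof (intro continuous_on_sum ballI)
    fix i assume "i \<in> {..<K}"
    then have "0 < L i + lam" if "lam \<in> {l0..l1}" for lam
      using c_le[of i lam] that assms by force
    then show "continuous_on {l0..l1} (\<lambda>lam. (c / (L i + lam)) powr r)"
      by (intro continuous_intros) (use assms in force)+
  qed
  moreover have "1 \<le> g l0"
  proof -
    have "(c / (L b + l0)) powr r \<le> g l0"
      unfolding g_def using b(1) assms c_le by (intro member_le_sum) auto
    then show ?thesis using b assms unfolding l0_def by simp
  qed
  moreover have "g l1 \<le> 1"
    unfolding g_def r_def using assms m_le by (intro kkt_mass_le_one) (auto simp: l1_def)
  ultimately obtain lam where "l0 \<le> lam" "g lam = 1"
    using IVT2'[of g l1 1 l0] \<open>l0 \<le> l1\<close> by blast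
  then show ?thesis using c_le unfolding g_def r_def by blast
qed

lemma kkt_point_exists:
  assumes "0 < \<eta>"
  shows "\<exists>x lam. kkt_point a K \<eta> L x lam"
proof -
  define c where "c = a / ((1 - a) * \<eta>)"
  have "0 < c" unfolding c_def using a_pos a_less_one assms by simp
  then obtain lam where lam: "\<And>i. i < K \<Longrightarrow> c \<le> L i + lam"
    and mass: "(\<Sum>i<K. (c / (L i + lam)) powr (1 / (1 - a))) = 1"
    using kkt_multiplier_exists by blast
  define x where "x i = (if i < K then (c / (L i + lam)) powr (1 / (1 - a)) else 0)" for i
  have "x \<in> simplex K"
    unfolding simplex_def x_def using mass by auto
  moreover have "0 < x i \<and> c * x i powr (a - 1) = L i + lam" if "i < K" for i
  proof -
    have "0 < L i + lam" using lam[OF that] \<open>0 < c\<close> by linarith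
    moreover have "1 / (1 - a) * (a - 1) = -1" using a_less_one by (simp add: field_simps)
    ultimately show ?thesis
      unfolding x_def using that \<open>0 < c\<close> by (simp add: powr_powr powr_minus_divide)
  qed
  ultimately show ?thesis unfolding kkt_point_def c_def by blast
qed

lemma kkt_point_unique_minimiser:
  assumes x: "kkt_point a K \<eta> L x lam" and "0 < \<eta>" and q: "q \<in> simplex K"
    and "ftrl_obj a K \<eta> L q \<le> ftrl_obj a K \<eta> L x"
  shows "q = x"
proof -
  have "x \<in> simplex K" and x_pos: "\<And>i. i < K \<Longrightarrow> 0 < x i"
    using x unfolding kkt_point_def by auto
  have breg_nonneg: "0 \<le> tsallis_breg a \<eta> (q i) (x i)" if "i \<in> {..<K}" for i
    using x_pos that simplexD(1)[OF q] a_pos a_less_one assms(2) by (intro tsallis_breg_nonneg) auto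
  then have "0 \<le> (\<Sum>i<K. tsallis_breg a \<eta> (q i) (x i))"
    by (rule sum_nonneg)
  then have "(\<Sum>i<K. tsallis_breg a \<eta> (q i) (x i)) = 0"
    using ftrl_obj_diff_eq_breg[OF x q assms(2)] assms(4) by linarith
  then have breg_zero: "\<forall>i\<in>{..<K}. tsallis_breg a \<eta> (q i) (x i) = 0"
    using sum_nonneg_eq_0_iff[of "{..<K}" "\<lambda>i. tsallis_breg a \<eta> (q i) (x i)"] breg_nonneg
    by blast
  have "x i \<le> q i" if "i < K" for i
  proof (rule ccontr)
    assume "\<not> x i \<le> q i"
    then have "0 < tsallis_breg a \<eta> (q i) (x i)"
      using x_pos[OF that] simplexD(1)[OF q] a_pos a_less_one assms(2) by (intro tsallis_breg_pos) auto
    with breg_zero that show False by simp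
  qed
  moreover have "(\<Sum>i<K. q i - x i) = 0"
    using simplexD(3)[OF q] simplexD(3)[OF \<open>x \<in> simplex K\<close>] by (simp add: sum_subtractf)
  ultimately have "q i - x i = 0" if "i < K" for i
    using sum_nonneg_eq_0_iff[of "{..<K}" "\<lambda>i. q i - x i"] that by auto
  then show "q = x"
    using simplexD(2)[OF q] simplexD(2)[OF \<open>x \<in> simplex K\<close>]
    by (intro ext) (metis eq_iff_diff_eq_0 not_less)
qed

lemma ftarl_q_kkt_point:
  assumes "0 < \<eta>"
  shows "\<exists>lam. kkt_point a K \<eta> L (ftarl_q a K \<eta> L) lam"
proof -
  obtain x lam where x: "kkt_point a K \<eta> L x lam"
    using kkt_point_exists[OF assms] by blast
  then have "x \<in> simplex K"
    unfolding kkt_point_def by simp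
  have "ftarl_q a K \<eta> L \<in> simplex K \<and> (\<forall>v\<in>simplex K.
      reg a K \<eta> (ftarl_q a K \<eta> L) + (\<Sum>i<K. ftarl_q a K \<eta> L i * L i) \<le> reg a K \<eta> v + (\<Sum>i<K. v i * L i))"
    unfolding ftarl_q_def
    by (rule someI[of _ x])
      (use \<open>x \<in> simplex K\<close> kkt_point_minimises[OF x assms] in \<open>auto simp: ftrl_obj_def\<close>)
  then have "ftarl_q a K \<eta> L = x"
    using \<open>x \<in> simplex K\<close> by (intro kkt_point_unique_minimiser[OF x assms]) (auto simp: ftrl_obj_def)
  then show ?thesis
    using x by blast
qed

lemma ftrl_obj_step:
  assumes q: "kkt_point a K \<eta> L q lam" and "0 < \<eta>" and y: "y \<in> simplex K"
    and l: "\<And>i. i < K \<Longrightarrow> 0 \<le> l i"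
  shows "(\<Sum>i<K. q i * l i) - \<eta> / (2 * a) * (\<Sum>i<K. q i powr (2 - a) * (l i)^2)
      + ftrl_obj a K \<eta> L q \<le> ftrl_obj a K \<eta> (\<lambda>i. L i + l i) y"
proof -
  have "(\<Sum>i<K. (q i - y i) * l i - tsallis_breg a \<eta> (y i) (q i))
      \<le> (\<Sum>i<K. \<eta> * q i powr (2 - a) * (l i)^2 / (2 * a))"
    using q simplexD(1)[OF y] l a_pos a_less_one \<open>0 < \<eta>\<close> unfolding kkt_point_def
    by (intro sum_mono tsallis_breg_stability) auto
  moreover have "(\<Sum>i<K. \<eta> * q i powr (2 - a) * (l i)^2 / (2 * a))
      = \<eta> / (2 * a) * (\<Sum>i<K. q i powr (2 - a) * (l i)^2)"
    by (simp add: sum_distrib_left mult.assoc)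
  moreover have "(\<Sum>i<K. (q i - y i) * l i - tsallis_breg a \<eta> (y i) (q i)) =
      (\<Sum>i<K. q i * l i) - (\<Sum>i<K. y i * l i) - (ftrl_obj a K \<eta> L y - ftrl_obj a K \<eta> L q)"
    using ftrl_obj_diff_eq_breg[OF q y \<open>0 < \<eta>\<close>] by (simp add: sum_subtractf left_diff_distrib)
  moreover have "ftrl_obj a K \<eta> (\<lambda>i. L i + l i) y = ftrl_obj a K \<eta> L y + (\<Sum>i<K. y i * l i)"
    unfolding ftrl_obj_def by (simp add: distrib_left sum.distrib)
  ultimately show ?thesis by linarith
qed

end

section \<open>Processes indexed by histories\<close>

primrec path_sum :: "(nat list \<Rightarrow> nat \<Rightarrow> real) \<Rightarrow> nat list \<Rightarrow> real" where
  "path_sum f [] = 0"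
| "path_sum f (j # h) = path_sum f h + f h j"

primrec admissible :: "(nat list \<Rightarrow> nat set) \<Rightarrow> nat list \<Rightarrow> bool" where
  "admissible Act [] = True"
| "admissible Act (j # h) \<longleftrightarrow> j \<in> Act h \<and> admissible Act h"

lemma path_sum_mono:
  assumes "admissible Act H" "\<And>h j. j \<in> Act h \<Longrightarrow> f h j \<le> g h j"
  shows "path_sum f H \<le> path_sum g H"
  using assms by (induction H) (auto intro: add_mono)

lemma path_sum_add: "path_sum (\<lambda>h j. f h j + g h j) H = path_sum f H + path_sum g H"
  by (induction H) simp_all

lemma path_sum_diff: "path_sum (\<lambda>h j. f h j - g h j) H = path_sum f H - path_sum g H"
  by (induction H) simp_all

lemma path_sum_divide: "path_sum (\<lambda>h j. f h j / c) H = path_sum f H / c"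
  by (induction H) (simp_all add: add_divide_distrib)

text \<open>The law of a sequential process that samples arm \<open>j\<close> with probability \<open>\<kappa> h j\<close>
  after history \<open>h\<close>.\<close>

primrec path_weight :: "(nat list \<Rightarrow> nat \<Rightarrow> real) \<Rightarrow> nat list \<Rightarrow> real" where
  "path_weight \<kappa> [] = 1"
| "path_weight \<kappa> (j # h) = path_weight \<kappa> h * \<kappa> h j"

lemma path_weight_nonneg:
  assumes "\<And>h j. 0 \<le> \<kappa> h j"
  shows "0 \<le> path_weight \<kappa> H"
  using assms by (induction H) auto

lemma admissible_if_path_weight_nonzero:
  assumes "\<And>h j. j \<notin> Act h \<Longrightarrow> \<kappa> h j = 0" "path_weight \<kappa> H \<noteq> 0"
  shows "admissible Act H"
  using assms(2)
proof (induction H)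
  case (Cons j h)
  then have "path_weight \<kappa> h \<noteq> 0" "\<kappa> h j \<noteq> 0"
    by auto
  then show ?case
    using Cons.IH assms(1)[of j h] by fastforce
qed simp

definition histories :: "nat \<Rightarrow> nat \<Rightarrow> nat list set" where
  "histories K n = {H. length H = n \<and> set H \<subseteq> {..<K}}"

lemma histories_0: "histories K 0 = {[]}"
  unfolding histories_def by auto

lemma sum_histories_Suc:
  "(\<Sum>H\<in>histories K (Suc n). f H) = (\<Sum>h\<in>histories K n. \<Sum>j<K. f (j # h))"
proof -
  have histories_Suc: "histories K (Suc n) = (\<lambda>(h, j). j # h) ` (histories K n \<times> {..<K})"
    unfolding histories_def using lists_length_Suc_eq[of "{..<K}" n] by (simp add: conj_commute)
  have inj: "inj_on (\<lambda>(h, j). j # h) (histories K n \<times> {..<K})"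
    by (auto simp: inj_on_def)
  show ?thesis
    unfolding histories_Suc sum.reindex[OF inj] sum.cartesian_product by (simp add: case_prod_beta)
qed

lemma hist_prob_eq: "hist_prob K n w P = (\<Sum>H\<in>histories K n. w H * (if P H then 1 else 0))"
  unfolding hist_prob_def histories_def by simp

lemma sum_path_weight:
  assumes "\<And>h. (\<Sum>j<K. \<kappa> h j) = 1"
  shows "(\<Sum>H\<in>histories K n. path_weight \<kappa> H) = 1"
proof (induction n)
  case (Suc n)
  then show ?case
    by (simp add: sum_histories_Suc assms flip: sum_distrib_left)
qed (simp add: histories_0)

lemma sum_path_weight_exp_le:
  assumes "\<And>h j. 0 \<le> \<kappa> h j" "\<And>h. length h < n \<Longrightarrow> (\<Sum>j<K. \<kappa> h j * exp (Y h j)) \<le> 1"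
  shows "(\<Sum>H\<in>histories K n. path_weight \<kappa> H * exp (path_sum Y H)) \<le> 1"
  using assms(2)
proof (induction n)
  case (Suc n)
  have "(\<Sum>H\<in>histories K (Suc n). path_weight \<kappa> H * exp (path_sum Y H))
      = (\<Sum>h\<in>histories K n. path_weight \<kappa> h * exp (path_sum Y h) * (\<Sum>j<K. \<kappa> h j * exp (Y h j)))"
    by (simp add: sum_histories_Suc exp_add sum_distrib_left algebra_simps)
  also have "\<dots> \<le> (\<Sum>h\<in>histories K n. path_weight \<kappa> h * exp (path_sum Y h) * 1)"
    using Suc.prems path_weight_nonneg[OF assms(1)]
    by (intro sum_mono mult_left_mono) (auto simp: histories_def)
  also have "\<dots> \<le> 1"
    using Suc by simp
  finally show ?case .
qed (simp add: histories_0)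

lemma hist_prob_path_sum_ge_le:
  assumes "\<And>h j. 0 \<le> \<kappa> h j" "\<And>h. length h < n \<Longrightarrow> (\<Sum>j<K. \<kappa> h j * exp (Y h j)) \<le> 1"
  shows "hist_prob K n (path_weight \<kappa>) (\<lambda>H. c \<le> path_sum Y H) \<le> exp (- c)"
proof -
  have "hist_prob K n (path_weight \<kappa>) (\<lambda>H. c \<le> path_sum Y H)
      \<le> (\<Sum>H\<in>histories K n. exp (- c) * (path_weight \<kappa> H * exp (path_sum Y H)))"
    unfolding hist_prob_eq
  proof (intro sum_mono)
    fix H
    have "path_weight \<kappa> H * (if c \<le> path_sum Y H then 1 else 0)
        \<le> path_weight \<kappa> H * (exp (- c) * exp (path_sum Y H))"
      using path_weight_nonneg[OF assms(1)] by (intro mult_left_mono) (simp_all flip: exp_add)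
    then show "path_weight \<kappa> H * (if c \<le> path_sum Y H then 1 else 0)
        \<le> exp (- c) * (path_weight \<kappa> H * exp (path_sum Y H))"
      by (simp add: ac_simps)
  qed
  also have "\<dots> \<le> exp (- c)"
    using sum_path_weight_exp_le[OF assms] by (simp add: flip: sum_distrib_left)
  finally show ?thesis .
qed

lemma hist_prob_mono:
  assumes "\<And>H. 0 \<le> w H" "\<And>H. length H = n \<Longrightarrow> w H \<noteq> 0 \<Longrightarrow> P H \<Longrightarrow> Q H"
  shows "hist_prob K n w P \<le> hist_prob K n w Q"
  unfolding hist_prob_eq
proof (intro sum_mono)
  fix H assume "H \<in> histories K n"
  then show "w H * (if P H then 1 else 0) \<le> w H * (if Q H then 1 else 0)"
    using assms(1)[of H] assms(2)[of H] unfolding histories_def by (cases "w H = 0") auto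
qed

lemma hist_prob_disj_le:
  assumes "\<And>H. 0 \<le> w H"
  shows "hist_prob K n w (\<lambda>H. P H \<or> Q H) \<le> hist_prob K n w P + hist_prob K n w Q"
  unfolding hist_prob_eq sum.distrib[symmetric] using assms by (intro sum_mono) auto

lemma hist_prob_Bex_le:
  assumes "\<And>H. 0 \<le> w H" "finite B"
  shows "hist_prob K n w (\<lambda>H. \<exists>b\<in>B. P b H) \<le> (\<Sum>b\<in>B. hist_prob K n w (P b))"
  using assms(2)
proof (induction B rule: finite_induct)
  case (insert b B)
  have "hist_prob K n w (\<lambda>H. \<exists>b'\<in>insert b B. P b' H)
      \<le> hist_prob K n w (P b) + hist_prob K n w (\<lambda>H. \<exists>b'\<in>B. P b' H)"
    using hist_prob_disj_le[OF assms(1)] by simp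
  then show ?case
    using insert by simp
qed (simp add: hist_prob_eq)

lemma hist_prob_not:
  assumes "(\<Sum>H\<in>histories K n. w H) = 1"
  shows "hist_prob K n w (\<lambda>H. \<not> P H) = 1 - hist_prob K n w P"
proof -
  have "(\<Sum>H\<in>histories K n. w H * (if \<not> P H then 1 else 0))
      = (\<Sum>H\<in>histories K n. w H - w H * (if P H then 1 else 0))"
    by (intro sum.cong) auto
  then show ?thesis
    unfolding hist_prob_eq using assms by (simp add: sum_subtractf)
qed

section \<open>The FTARL run\<close>

locale ftarl_run = tsallis_simplex a K for a K +
  fixes eta gamma :: "nat \<Rightarrow> real" and Act :: "nat list \<Rightarrow> nat set"
    and loss :: "nat list \<Rightarrow> nat \<Rightarrow> real"
  assumes eta_pos: "\<And>t. 1 \<le> t \<Longrightarrow> 0 < eta t"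
    and gamma_pos: "\<And>t. 1 \<le> t \<Longrightarrow> 0 < gamma t"
    and eta_decreasing: "\<And>t. 1 \<le> t \<Longrightarrow> eta (Suc t) \<le> eta t"
    and gamma_decreasing: "\<And>t. 1 \<le> t \<Longrightarrow> gamma (Suc t) \<le> gamma t"
    and eta_le_gamma: "\<And>t. 1 \<le> t \<Longrightarrow> eta t \<le> 2 * gamma t"
    and Act_subset: "\<And>h. Act h \<subseteq> {..<K}"
    and Act_nonempty: "\<And>h. Act h \<noteq> {}"
    and loss_nonneg: "\<And>h i. i < K \<Longrightarrow> 0 \<le> loss h i"
    and loss_le_one: "\<And>h i. i < K \<Longrightarrow> loss h i \<le> 1"
begin

text \<open>Quantities of the round that follows history \<open>h\<close>, i.e. of round \<open>length h + 1\<close>.\<close>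

definition eta_at :: "nat list \<Rightarrow> real" where
  "eta_at h = eta (Suc (length h))"

definition gamma_at :: "nat list \<Rightarrow> real" where
  "gamma_at h = gamma (Suc (length h))"

definition cum_est :: "nat list \<Rightarrow> nat \<Rightarrow> real" where
  "cum_est h = Lcum a K eta gamma Act loss h"

definition q_at :: "nat list \<Rightarrow> nat \<Rightarrow> real" where
  "q_at h = ftarl_q a K (eta_at h) (cum_est h)"

definition p_at :: "nat list \<Rightarrow> nat \<Rightarrow> real" where
  "p_at h = prob_arm a K eta gamma Act loss h"

definition act_mass :: "nat list \<Rightarrow> real" where
  "act_mass h = (\<Sum>i\<in>Act h. q_at h i)"

definition est :: "nat list \<Rightarrow> nat \<Rightarrow> nat \<Rightarrow> real" where
  "est h j = ltil (p_at h) (gamma_at h) (Act h) j (loss h j)"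

definition act_est_sum :: "nat list \<Rightarrow> nat \<Rightarrow> real" where
  "act_est_sum h j = (\<Sum>i\<in>Act h. ltil_act (p_at h) (gamma_at h) j (loss h j) i)"

lemma eta_at_pos: "0 < eta_at h"
  unfolding eta_at_def using eta_pos by simp

lemma gamma_at_pos: "0 < gamma_at h"
  unfolding gamma_at_def using gamma_pos by simp

lemma eta_at_le_gamma_at: "eta_at h \<le> 2 * gamma_at h"
  unfolding eta_at_def gamma_at_def using eta_le_gamma by simp

lemma gamma_antimono:
  assumes "1 \<le> t" "t \<le> s"
  shows "gamma s \<le> gamma t"
  using assms(2)
proof (induction s rule: dec_induct)
  case (step s)
  then show ?case using gamma_decreasing[of s] assms(1) by simp
qed simp

lemma Act_less_K: "i \<in> Act h \<Longrightarrow> i < K"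
  using Act_subset by blast

lemma finite_Act: "finite (Act h)"
  using Act_subset finite_subset by blast

lemma card_Act_ge_one: "1 \<le> card (Act h)"
  using finite_Act Act_nonempty by (simp add: Suc_le_eq card_gt_0_iff)

lemma loss_nonneg_Act: "i \<in> Act h \<Longrightarrow> 0 \<le> loss h i"
  using loss_nonneg Act_less_K by blast

lemma loss_le_one_Act: "i \<in> Act h \<Longrightarrow> loss h i \<le> 1"
  using loss_le_one Act_less_K by blast

lemma sum_lessThan_split_Act:
  "(\<Sum>i<K. f i) = (\<Sum>i\<in>Act h. f i) + (\<Sum>i\<in>{..<K} - Act h. f i)"
  using sum.subset_diff[OF Act_subset finite_lessThan] by (simp add: add.commute)

lemma q_at_kkt: "\<exists>lam. kkt_point a K (eta_at h) (cum_est h) (q_at h) lam"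
  unfolding q_at_def using ftarl_q_kkt_point[OF eta_at_pos] .

lemma q_at_simplex: "q_at h \<in> simplex K"
  using q_at_kkt unfolding kkt_point_def by blast

lemma q_at_pos: "i < K \<Longrightarrow> 0 < q_at h i"
  using q_at_kkt unfolding kkt_point_def by blast

lemma q_at_nonneg: "0 \<le> q_at h i"
  using simplexD(1)[OF q_at_simplex] .

lemma q_at_powr_le: "q_at h i powr (2 - a) \<le> q_at h i"
proof (cases "q_at h i = 0")
  case False
  then show ?thesis
    using q_at_nonneg[of h i] simplex_le_one[OF q_at_simplex] a_less_one
    by (intro powr_le_one_le[of "q_at h i" "2 - a", simplified]) auto
qed simp

lemma act_mass_pos: "0 < act_mass h"
  unfolding act_mass_def using finite_Act Act_nonempty q_at_pos Act_less_K by (intro sum_pos) auto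

lemma act_mass_add_inactive: "act_mass h + (\<Sum>i\<in>{..<K} - Act h. q_at h i) = 1"
  using simplexD(3)[OF q_at_simplex] sum_lessThan_split_Act[of "q_at h" h]
  unfolding act_mass_def by simp

lemma act_mass_le_one: "act_mass h \<le> 1"
  using act_mass_add_inactive[of h] sum_nonneg[of "{..<K} - Act h" "q_at h"] q_at_nonneg by force

lemma p_at_eq: "p_at h i = (if i \<in> Act h then q_at h i else 0) / act_mass h"
  unfolding p_at_def prob_arm_def round_p_def ftarl_p_def q_at_def act_mass_def eta_at_def cum_est_def
  by simp

lemma p_at_active: "i \<in> Act h \<Longrightarrow> p_at h i = q_at h i / act_mass h"
  by (simp add: p_at_eq)

lemma p_at_inactive: "i \<notin> Act h \<Longrightarrow> p_at h i = 0"
  by (simp add: p_at_eq)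

lemma p_at_nonneg: "0 \<le> p_at h i"
  using act_mass_pos[of h] q_at_nonneg by (simp add: p_at_eq)

lemma p_at_pos: "i \<in> Act h \<Longrightarrow> 0 < p_at h i"
  using act_mass_pos[of h] q_at_pos[of i h] Act_less_K[of i h] by (simp add: p_at_active)

lemma sum_p_at_Act: "(\<Sum>j\<in>Act h. p_at h j) = 1"
  using act_mass_pos[of h] by (simp add: p_at_active act_mass_def flip: sum_divide_distrib)

lemma sum_lessThan_p_at: "(\<Sum>j<K. p_at h j * f j) = (\<Sum>j\<in>Act h. p_at h j * f j)"
  using Act_subset by (intro sum.mono_neutral_right) (auto simp: p_at_inactive)

lemma sum_p_at: "(\<Sum>j<K. p_at h j) = 1"
  using sum_lessThan_p_at[of h "\<lambda>_. 1"] sum_p_at_Act[of h] by simp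

lemma ftarl_weight_eq_path_weight: "ftarl_weight a K eta gamma Act loss = path_weight p_at"
proof
  show "ftarl_weight a K eta gamma Act loss H = path_weight p_at H" for H
    by (induction H) (simp_all add: p_at_def)
qed

lemma cum_est_Nil: "cum_est [] = (\<lambda>i. 0)"
  unfolding cum_est_def by simp

lemma cum_est_Cons: "cum_est (j # h) = (\<lambda>i. cum_est h i + est h j i)"
  unfolding cum_est_def est_def p_at_def gamma_at_def prob_arm_def by (simp add: Let_def)

lemma cum_est_eq_path_sum: "cum_est H i = path_sum (\<lambda>h j. est h j i) H"
  by (induction H) (simp_all add: cum_est_Nil cum_est_Cons)

lemma regret_eq_path_sum:
  "regret Act loss b H = path_sum (\<lambda>h j. if b \<in> Act h then loss h j - loss h b else 0) H"
  by (induction H) simp_all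

lemma bonus_eq_path_sum:
  "bonus a eta gamma Act H = path_sum (\<lambda>h j. (eta_at h / (2 * a) + gamma_at h) * real (card (Act h))) H"
  by (induction H) (simp_all add: eta_at_def gamma_at_def)

lemma sum_Act_ltil_act:
  assumes "j \<in> Act h"
  shows "(\<Sum>i\<in>Act h. f i * ltil_act (p_at h) (gamma_at h) j (loss h j) i)
    = f j * (loss h j / (p_at h j + gamma_at h))"
  using assms finite_Act by (simp add: ltil_act_def if_distrib[of "\<lambda>x. f _ * x"] cong: if_cong)

lemma est_active: "i \<in> Act h \<Longrightarrow> est h j i = ltil_act (p_at h) (gamma_at h) j (loss h j) i"
  unfolding est_def ltil_def by simp

lemma est_inactive: "i \<notin> Act h \<Longrightarrow> est h j i = loss h j - gamma_at h * act_est_sum h j"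
  unfolding est_def ltil_def act_est_sum_def by simp

lemma act_est_sum_eq: "j \<in> Act h \<Longrightarrow> act_est_sum h j = loss h j / (p_at h j + gamma_at h)"
  unfolding act_est_sum_def using sum_Act_ltil_act[of j h "\<lambda>_. 1"] by simp

lemma act_est_sum_nonneg: "j \<in> Act h \<Longrightarrow> 0 \<le> act_est_sum h j"
  using loss_nonneg_Act p_at_pos gamma_at_pos[of h] by (simp add: act_est_sum_eq add_pos_pos less_imp_le)

lemma gamma_act_est_sum_le_loss:
  assumes "j \<in> Act h"
  shows "gamma_at h * act_est_sum h j \<le> loss h j"
proof -
  have "gamma_at h * act_est_sum h j = loss h j * (gamma_at h / (p_at h j + gamma_at h))"
    using act_est_sum_eq[OF assms] by (simp add: field_simps)
  also have "\<dots> \<le> loss h j * 1"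
    using p_at_pos[OF assms] gamma_at_pos[of h] loss_nonneg_Act[OF assms] by (intro mult_left_mono) auto
  finally show ?thesis by simp
qed

lemma est_nonneg:
  assumes "j \<in> Act h"
  shows "0 \<le> est h j i"
proof (cases "i \<in> Act h")
  case True
  then show ?thesis
    using loss_nonneg_Act[OF assms] p_at_pos[OF assms] gamma_at_pos[of h]
    by (simp add: est_active ltil_act_def add_pos_pos less_imp_le)
next
  case False
  then show ?thesis
    using gamma_act_est_sum_le_loss[OF assms] by (simp add: est_inactive)
qed

lemma est_inactive_le_one: "j \<in> Act h \<Longrightarrow> i \<notin> Act h \<Longrightarrow> est h j i \<le> 1"
  using gamma_at_pos[of h] act_est_sum_nonneg[of j h] loss_le_one_Act[of j h]
  by (simp add: est_inactive) (smt (verit) mult_nonneg_nonneg)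

lemma sum_q_at_est:
  assumes j: "j \<in> Act h"
  shows "(\<Sum>i<K. q_at h i * est h j i) = loss h j - gamma_at h * act_est_sum h j"
proof -
  define S where "S = act_est_sum h j"
  have active: "(\<Sum>i\<in>Act h. q_at h i * est h j i) = act_mass h * p_at h j * S"
    using sum_Act_ltil_act[OF j, of "q_at h"] p_at_active[OF j] act_mass_pos[of h]
    unfolding S_def act_est_sum_eq[OF j] by (simp add: est_active)
  have inactive: "(\<Sum>i\<in>{..<K} - Act h. q_at h i * est h j i) = (1 - act_mass h) * (loss h j - gamma_at h * S)"
    using act_mass_add_inactive[of h] unfolding S_def
    by (simp add: est_inactive sum_distrib_right[symmetric])
  have "(p_at h j + gamma_at h) * S = loss h j"
    unfolding S_def act_est_sum_eq[OF j] using p_at_pos[OF j] gamma_at_pos[of h] by simp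
  then have "act_mass h * ((p_at h j + gamma_at h) * S) = act_mass h * loss h j"
    by simp
  then show ?thesis
    unfolding sum_lessThan_split_Act[of _ h] active inactive S_def[symmetric]
    by (simp add: algebra_simps)
qed

definition lin_loss :: "nat list \<Rightarrow> nat \<Rightarrow> real" where
  "lin_loss h j = (\<Sum>i<K. q_at h i * est h j i)"

definition stab_term :: "nat list \<Rightarrow> nat \<Rightarrow> real" where
  "stab_term h j = eta_at h / (2 * a) * (\<Sum>i<K. q_at h i powr (2 - a) * (est h j i)^2)"

lemma ftrl_round:
  assumes "j \<in> Act h" "u \<in> simplex K"
  shows "lin_loss h j - stab_term h j + ftrl_obj a K (eta_at h) (cum_est h) (q_at h)
    \<le> ftrl_obj a K (eta_at h) (cum_est (j # h)) u"
proof -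
  obtain lam where "kkt_point a K (eta_at h) (cum_est h) (q_at h) lam"
    using q_at_kkt by blast
  from ftrl_obj_step[OF this eta_at_pos assms(2), of "est h j"] show ?thesis
    using est_nonneg[OF assms(1)] unfolding lin_loss_def stab_term_def cum_est_Cons by simp
qed

lemma ftrl_invariant:
  assumes "admissible Act h"
  shows "path_sum lin_loss h - path_sum stab_term h \<le> ftrl_obj a K (eta_at h) (cum_est h) (q_at h)"
  using assms
proof (induction h)
  case Nil
  then show ?case
    using reg_nonneg[OF q_at_simplex eta_at_pos] by (simp add: ftrl_obj_def cum_est_Nil)
next
  case (Cons j h)
  have "eta_at (j # h) \<le> eta_at h"
    unfolding eta_at_def using eta_decreasing[of "Suc (length h)"] by simp
  then have "ftrl_obj a K (eta_at h) (cum_est (j # h)) (q_at (j # h))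
      \<le> ftrl_obj a K (eta_at (j # h)) (cum_est (j # h)) (q_at (j # h))"
    unfolding ftrl_obj_def using reg_antimono[OF q_at_simplex eta_at_pos] by simp
  then show ?case
    using Cons ftrl_round[of j h "q_at (j # h)"] q_at_simplex by simp
qed

lemma ftrl_regret_le:
  assumes "admissible Act H" "length H = T" "1 \<le> T" "b < K"
  shows "path_sum lin_loss H - path_sum stab_term H - cum_est H b
    \<le> (real K powr (1 - a) - 1) / (eta T * (1 - a))"
proof -
  obtain j h where H: "H = j # h"
    using assms(2,3) by (cases H) auto
  define e where "e i = (if i = b then 1 else 0 :: real)" for i
  have "eta_at h = eta T"
    unfolding eta_at_def using assms(2) H by simp
  moreover have "(\<Sum>i<K. e i * cum_est H i) = cum_est H b"
    using assms(4) by (simp add: e_def if_distrib[of "\<lambda>x. x * _"] cong: if_cong)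
  ultimately have "path_sum lin_loss H - path_sum stab_term H \<le> reg a K (eta T) e + cum_est H b"
    using ftrl_invariant[of h] ftrl_round[of j h e] vertex_in_simplex[OF assms(4)] assms(1)
    unfolding H e_def[symmetric] ftrl_obj_def by simp
  then show ?thesis
    using reg_vertex_le[OF assms(4), of "eta T"] eta_pos assms(3) unfolding e_def by simp
qed

section \<open>Implicit-exploration concentration and the regret bound\<close>

definition ix_gap :: "(nat list \<Rightarrow> nat \<Rightarrow> real) \<Rightarrow> nat list \<Rightarrow> nat \<Rightarrow> real" where
  "ix_gap wt h j = (\<Sum>i\<in>Act h. wt h i * (ltil_act (p_at h) (gamma_at h) j (loss h j) i - loss h i))"

lemma ix_gap_eq:
  assumes "j \<in> Act h"
  shows "ix_gap wt h j = wt h j * loss h j / (p_at h j + gamma_at h) - (\<Sum>i\<in>Act h. wt h i * loss h i)"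
  using sum_Act_ltil_act[OF assms, of "wt h"]
  unfolding ix_gap_def by (simp add: right_diff_distrib sum_subtractf)

lemma ix_gap_exp_moment_le:
  assumes wt: "\<And>i. i \<in> Act h \<Longrightarrow> 0 \<le> wt h i \<and> wt h i \<le> 2 * gamma_at h"
  shows "(\<Sum>j<K. p_at h j * exp (ix_gap wt h j)) \<le> 1"
proof -
  define B where "B = (\<Sum>i\<in>Act h. wt h i * loss h i)"
  have "(\<Sum>j<K. p_at h j * exp (ix_gap wt h j)) = (\<Sum>j\<in>Act h. p_at h j * exp (ix_gap wt h j))"
    by (rule sum_lessThan_p_at)
  also have "\<dots> \<le> (\<Sum>j\<in>Act h. (p_at h j + wt h j * loss h j) * exp (- B))"
  proof (intro sum_mono)
    fix j assume j: "j \<in> Act h"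
    have "0 < p_at h j" using p_at_pos[OF j] .
    have "exp (ix_gap wt h j) = exp (wt h j * loss h j / (p_at h j + gamma_at h)) * exp (- B)"
      unfolding ix_gap_eq[OF j] B_def by (simp add: exp_diff exp_minus field_simps)
    also have "\<dots> \<le> (1 + wt h j * loss h j / p_at h j) * exp (- B)"
      using wt[OF j] \<open>0 < p_at h j\<close> gamma_at_pos loss_nonneg_Act[OF j] loss_le_one_Act[OF j]
      by (intro mult_right_mono exp_implicit_exploration_le) auto
    finally show "p_at h j * exp (ix_gap wt h j) \<le> (p_at h j + wt h j * loss h j) * exp (- B)"
      using \<open>0 < p_at h j\<close> mult_left_mono[of _ _ "p_at h j"] by (simp add: field_simps)
  qed
  also have "\<dots> = (1 + B) * exp (- B)"
    unfolding B_def by (simp add: sum_distrib_right[symmetric] sum.distrib sum_p_at_Act)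
  also have "\<dots> \<le> exp B * exp (- B)"
    using exp_ge_add_one_self[of B] by (intro mult_right_mono) auto
  finally show ?thesis by (simp add: exp_minus)
qed

lemma hist_prob_ix_gap_ge_le:
  assumes "\<And>h i. length h < T \<Longrightarrow> i \<in> Act h \<Longrightarrow> 0 \<le> wt h i \<and> wt h i \<le> 2 * gamma_at h"
    and "0 < x"
  shows "hist_prob K T (path_weight p_at) (\<lambda>H. ln x \<le> path_sum (ix_gap wt) H) \<le> 1 / x"
proof -
  have "hist_prob K T (path_weight p_at) (\<lambda>H. ln x \<le> path_sum (ix_gap wt) H) \<le> exp (- ln x)"
  proof (rule hist_prob_path_sum_ge_le[OF p_at_nonneg])
    fix h :: "nat list"
    assume "length h < T"
    then show "(\<Sum>j<K. p_at h j * exp (ix_gap wt h j)) \<le> 1"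
      using assms(1) by (intro ix_gap_exp_moment_le) auto
  qed
  then show ?thesis
    using assms(2) by (simp add: exp_minus inverse_eq_divide)
qed

text \<open>The three weight sequences fed to the concentration bound: one controls the stability
  term, one the exploration bias, and one the estimation error of a fixed comparator \<open>b\<close>.\<close>

definition stab_weight :: "nat list \<Rightarrow> nat \<Rightarrow> real" where
  "stab_weight h i = eta_at h * q_at h i powr (2 - a) * loss h i / (p_at h i + gamma_at h)"

definition explore_weight :: "nat list \<Rightarrow> nat \<Rightarrow> real" where
  "explore_weight h i = 2 * gamma_at h"

definition comparator_weight :: "nat \<Rightarrow> nat \<Rightarrow> nat list \<Rightarrow> nat \<Rightarrow> real" where
  "comparator_weight T b h i = (if i = b then 2 * gamma T else 0)"

lemma stab_weight_factor_le:
  assumes "i \<in> Act h"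
  shows "q_at h i powr (2 - a) * loss h i / (p_at h i + gamma_at h) \<le> act_mass h"
proof -
  have "q_at h i powr (2 - a) * loss h i \<le> q_at h i * 1"
    using q_at_powr_le[of h i] loss_nonneg_Act[OF assms] loss_le_one_Act[OF assms] q_at_nonneg[of h i]
    by (intro mult_mono) auto
  then have "q_at h i powr (2 - a) * loss h i / (p_at h i + gamma_at h) \<le> q_at h i / p_at h i"
    using p_at_pos[OF assms] gamma_at_pos[of h] q_at_nonneg[of h i]
    by (intro frac_le) auto
  also have "\<dots> = act_mass h"
    using p_at_active[OF assms] act_mass_pos[of h] q_at_pos[OF Act_less_K[OF assms], of h]
    by (simp add: less_imp_neq[symmetric])
  finally show ?thesis .
qed

lemma stab_weight_bounds:
  assumes "i \<in> Act h"
  shows "0 \<le> stab_weight h i \<and> stab_weight h i \<le> 2 * gamma_at h"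
proof -
  define f where "f = q_at h i powr (2 - a) * loss h i / (p_at h i + gamma_at h)"
  have "0 \<le> f"
    unfolding f_def using loss_nonneg_Act[OF assms] p_at_pos[OF assms] gamma_at_pos[of h] by simp
  moreover have "f \<le> 1"
    unfolding f_def using stab_weight_factor_le[OF assms] act_mass_le_one[of h] by linarith
  ultimately have "0 \<le> eta_at h * f" "eta_at h * f \<le> eta_at h"
    using eta_at_pos[of h] mult_left_le by auto
  moreover have "stab_weight h i = eta_at h * f"
    unfolding stab_weight_def f_def by simp
  ultimately show ?thesis
    using eta_at_le_gamma_at[of h] by simp
qed

lemma explore_weight_bounds: "0 \<le> explore_weight h i \<and> explore_weight h i \<le> 2 * gamma_at h"
  unfolding explore_weight_def using gamma_at_pos[of h] by simp

lemma comparator_weight_bounds: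
  "length h < T \<Longrightarrow> 0 \<le> comparator_weight T b h i \<and> comparator_weight T b h i \<le> 2 * gamma_at h"
  unfolding comparator_weight_def gamma_at_def
  using gamma_antimono[of "Suc (length h)" T] gamma_pos[of T] by auto

lemma stab_term_active_le:
  assumes "j \<in> Act h"
  shows "eta_at h * (\<Sum>i\<in>Act h. q_at h i powr (2 - a) * (est h j i)^2)
    \<le> ix_gap stab_weight h j + eta_at h * act_mass h * real (card (Act h))"
proof -
  define Z where "Z = q_at h j powr (2 - a) * (loss h j / (p_at h j + gamma_at h))^2"
  have "(\<Sum>i\<in>Act h. q_at h i powr (2 - a) * (est h j i)^2) = (\<Sum>i\<in>Act h. if i = j then Z else 0)"
    by (intro sum.cong refl) (simp add: est_active ltil_act_def Z_def)
  then have active: "(\<Sum>i\<in>Act h. q_at h i powr (2 - a) * (est h j i)^2) = Z"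
    using assms finite_Act by simp
  have "eta_at h * Z = ix_gap stab_weight h j + (\<Sum>i\<in>Act h. stab_weight h i * loss h i)"
    unfolding ix_gap_eq[OF assms] stab_weight_def Z_def by (simp add: power2_eq_square)
  moreover have "(\<Sum>i\<in>Act h. stab_weight h i * loss h i) \<le> (\<Sum>i\<in>Act h. eta_at h * act_mass h)"
  proof (intro sum_mono)
    fix i assume i: "i \<in> Act h"
    have "0 \<le> q_at h i powr (2 - a) * loss h i / (p_at h i + gamma_at h)"
      using loss_nonneg_Act[OF i] p_at_pos[OF i] gamma_at_pos[of h] by simp
    then have "q_at h i powr (2 - a) * loss h i / (p_at h i + gamma_at h) * loss h i \<le> act_mass h * 1"
      using stab_weight_factor_le[OF i] loss_nonneg_Act[OF i] loss_le_one_Act[OF i] act_mass_pos[of h]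
      by (intro mult_mono) auto
    then have "eta_at h * (q_at h i powr (2 - a) * loss h i / (p_at h i + gamma_at h) * loss h i)
        \<le> eta_at h * act_mass h"
      using eta_at_pos[of h] by (intro mult_left_mono) auto
    then show "stab_weight h i * loss h i \<le> eta_at h * act_mass h"
      unfolding stab_weight_def by (simp add: algebra_simps)
  qed
  ultimately show ?thesis
    unfolding active by (simp add: algebra_simps)
qed

lemma stab_term_inactive_le:
  assumes "j \<in> Act h"
  shows "(\<Sum>i\<in>{..<K} - Act h. q_at h i powr (2 - a) * (est h j i)^2) \<le> 1 - act_mass h"
proof -
  have "(\<Sum>i\<in>{..<K} - Act h. q_at h i powr (2 - a) * (est h j i)^2) \<le> (\<Sum>i\<in>{..<K} - Act h. q_at h i * 1)"
  proof (intro sum_mono mult_mono)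
    fix i assume "i \<in> {..<K} - Act h"
    then show "(est h j i)^2 \<le> 1"
      using est_nonneg[OF assms, of i] est_inactive_le_one[OF assms, of i] by (simp add: power_le_one)
  qed (simp_all add: q_at_powr_le q_at_nonneg)
  then show ?thesis
    using act_mass_add_inactive[of h] by simp
qed

lemma stab_term_le:
  assumes "j \<in> Act h"
  shows "stab_term h j \<le> (eta_at h * real (card (Act h)) + ix_gap stab_weight h j) / (2 * a)"
proof -
  have "(1 - act_mass h) * 1 \<le> (1 - act_mass h) * real (card (Act h))"
    using act_mass_le_one[of h] card_Act_ge_one[of h] by (intro mult_left_mono) auto
  then have "eta_at h * (act_mass h * real (card (Act h)) + (1 - act_mass h))
      \<le> eta_at h * real (card (Act h))"
    using eta_at_pos[of h] by (intro mult_left_mono) (auto simp: algebra_simps)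
  then have "eta_at h * act_mass h * real (card (Act h)) + eta_at h * (1 - act_mass h)
      \<le> eta_at h * real (card (Act h))"
    by (simp add: algebra_simps)
  moreover have "eta_at h * (\<Sum>i\<in>{..<K} - Act h. q_at h i powr (2 - a) * (est h j i)^2)
      \<le> eta_at h * (1 - act_mass h)"
    using stab_term_inactive_le[OF assms] eta_at_pos[of h] by (intro mult_left_mono) auto
  ultimately have "eta_at h * (\<Sum>i<K. q_at h i powr (2 - a) * (est h j i)^2)
      \<le> eta_at h * real (card (Act h)) + ix_gap stab_weight h j"
    using stab_term_active_le[OF assms] unfolding sum_lessThan_split_Act[of _ h] distrib_left
    by linarith
  then show ?thesis
    unfolding stab_term_def using a_pos by (simp add: divide_right_mono)
qed

lemma gamma_act_est_sum_le:
  assumes "j \<in> Act h"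
  shows "gamma_at h * act_est_sum h j \<le> ix_gap explore_weight h j / 2 + gamma_at h * real (card (Act h))"
proof -
  have "(\<Sum>i\<in>Act h. loss h i) \<le> (\<Sum>i\<in>Act h. 1)"
    using loss_le_one_Act by (intro sum_mono) auto
  then have "gamma_at h * (\<Sum>i\<in>Act h. loss h i) \<le> gamma_at h * real (card (Act h))"
    using gamma_at_pos[of h] by (intro mult_left_mono) auto
  moreover have "ix_gap explore_weight h j
      = 2 * (gamma_at h * act_est_sum h j) - 2 * (gamma_at h * (\<Sum>i\<in>Act h. loss h i))"
    unfolding ix_gap_eq[OF assms] explore_weight_def act_est_sum_eq[OF assms]
    by (simp add: sum_distrib_left algebra_simps)
  ultimately show ?thesis by linarith
qed

lemma comparator_regret_le:
  assumes "j \<in> Act h" "0 < gamma T"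
  shows "(if b \<in> Act h then loss h j - loss h b else 0)
    \<le> lin_loss h j - est h j b + gamma_at h * act_est_sum h j
      + ix_gap (comparator_weight T b) h j / (2 * gamma T)"
proof (cases "b \<in> Act h")
  case True
  have "(\<Sum>i\<in>Act h. comparator_weight T b h i * loss h i)
      = (\<Sum>i\<in>Act h. if i = b then 2 * gamma T * loss h b else 0)"
    by (intro sum.cong refl) (simp add: comparator_weight_def)
  also have "\<dots> = 2 * gamma T * loss h b"
    using True finite_Act by simp
  finally have "ix_gap (comparator_weight T b) h j = 2 * gamma T * (est h j b - loss h b)"
    unfolding ix_gap_eq[OF assms(1)] est_active[OF True] ltil_act_def comparator_weight_def
    by (auto simp: algebra_simps)
  then show ?thesis
    using True sum_q_at_est[OF assms(1)] assms(2) unfolding lin_loss_def by simp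
next
  case False
  then have "ix_gap (comparator_weight T b) h j = 0"
    using assms(1) by (auto simp: ix_gap_eq comparator_weight_def intro!: sum.neutral)
  then show ?thesis
    using False sum_q_at_est[OF assms(1)] est_inactive[OF False, of j]
      act_est_sum_nonneg[OF assms(1)] gamma_at_pos[of h]
    unfolding lin_loss_def by simp
qed

lemma regret_round_le:
  assumes "j \<in> Act h" "0 < gamma T"
  shows "(if b \<in> Act h then loss h j - loss h b else 0)
    \<le> (lin_loss h j - stab_term h j - est h j b)
      + (eta_at h / (2 * a) + gamma_at h) * real (card (Act h))
      + ix_gap stab_weight h j / (2 * a) + ix_gap explore_weight h j / 2
      + ix_gap (comparator_weight T b) h j / (2 * gamma T)"
  using comparator_regret_le[OF assms, of b] gamma_act_est_sum_le[OF assms(1)] stab_term_le[OF assms(1)]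
  by (simp add: add_divide_distrib algebra_simps)

lemma regret_le_ix_gaps:
  assumes "admissible Act H" "length H = T" "1 \<le> T" "b < K"
  shows "regret Act loss b H \<le> (real K powr (1 - a) - 1) / (eta T * (1 - a)) + bonus a eta gamma Act H
    + path_sum (ix_gap stab_weight) H / (2 * a) + path_sum (ix_gap explore_weight) H / 2
    + path_sum (ix_gap (comparator_weight T b)) H / (2 * gamma T)"
proof -
  have "0 < gamma T" using gamma_pos assms(3) by simp
  have "regret Act loss b H \<le> path_sum (\<lambda>h j. (lin_loss h j - stab_term h j - est h j b)
      + (eta_at h / (2 * a) + gamma_at h) * real (card (Act h))
      + ix_gap stab_weight h j / (2 * a) + ix_gap explore_weight h j / 2
      + ix_gap (comparator_weight T b) h j / (2 * gamma T)) H"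
    unfolding regret_eq_path_sum using assms(1) regret_round_le[OF _ \<open>0 < gamma T\<close>]
    by (rule path_sum_mono)
  also have "\<dots> = (path_sum lin_loss H - path_sum stab_term H - cum_est H b) + bonus a eta gamma Act H
      + path_sum (ix_gap stab_weight) H / (2 * a) + path_sum (ix_gap explore_weight) H / 2
      + path_sum (ix_gap (comparator_weight T b)) H / (2 * gamma T)"
    by (simp only: path_sum_add path_sum_diff path_sum_divide cum_est_eq_path_sum bonus_eq_path_sum)
  finally show ?thesis
    using ftrl_regret_le[OF assms] by linarith
qed

definition ix_deviation :: "real \<Rightarrow> nat \<Rightarrow> nat list \<Rightarrow> bool" where
  "ix_deviation \<delta> T H \<longleftrightarrow>
     (ln (3 / \<delta>) \<le> path_sum (ix_gap stab_weight) H \<or> ln (3 / \<delta>) \<le> path_sum (ix_gap explore_weight) H)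
     \<or> (\<exists>b\<in>{..<K}. ln (3 * real K / \<delta>) \<le> path_sum (ix_gap (comparator_weight T b)) H)"

lemma path_weight_p_at_nonneg: "0 \<le> path_weight p_at H"
  by (rule path_weight_nonneg) (rule p_at_nonneg)

lemma hist_prob_ix_deviation_le:
  assumes "0 < \<delta>"
  shows "hist_prob K T (path_weight p_at) (ix_deviation \<delta> T) \<le> \<delta>"
proof -
  let ?P = "hist_prob K T (path_weight p_at)"
  let ?stab = "\<lambda>H. ln (3 / \<delta>) \<le> path_sum (ix_gap stab_weight) H"
  let ?explore = "\<lambda>H. ln (3 / \<delta>) \<le> path_sum (ix_gap explore_weight) H"
  let ?comparator = "\<lambda>b H. ln (3 * real K / \<delta>) \<le> path_sum (ix_gap (comparator_weight T b)) H"
  have "?P (ix_deviation \<delta> T) \<le> ?P (\<lambda>H. ?stab H \<or> ?explore H) + ?P (\<lambda>H. \<exists>b\<in>{..<K}. ?comparator b H)"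
    unfolding ix_deviation_def by (rule hist_prob_disj_le[OF path_weight_p_at_nonneg])
  moreover have "?P (\<lambda>H. ?stab H \<or> ?explore H) \<le> ?P ?stab + ?P ?explore"
    by (rule hist_prob_disj_le[OF path_weight_p_at_nonneg])
  moreover have "?P (\<lambda>H. \<exists>b\<in>{..<K}. ?comparator b H) \<le> (\<Sum>b<K. ?P (?comparator b))"
    by (rule hist_prob_Bex_le[OF path_weight_p_at_nonneg]) simp
  moreover have "?P ?stab \<le> \<delta> / 3" "?P ?explore \<le> \<delta> / 3"
    using assms hist_prob_ix_gap_ge_le[where x = "3 / \<delta>"] stab_weight_bounds explore_weight_bounds by auto
  moreover have "(\<Sum>b<K. ?P (?comparator b)) \<le> (\<Sum>b<K. \<delta> / (3 * real K))"
    using assms K_pos hist_prob_ix_gap_ge_le[where x = "3 * real K / \<delta>"] comparator_weight_bounds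
    by (intro sum_mono) auto
  moreover have "(\<Sum>b<K. \<delta> / (3 * real K)) = \<delta> / 3"
    using K_pos by simp
  ultimately show ?thesis by linarith
qed

lemma max_regret_le:
  assumes "admissible Act H" "length H = T" "1 \<le> T" "\<not> ix_deviation \<delta> T H"
  shows "Max ((\<lambda>b. regret Act loss b H) ` {..<K})
    \<le> (real K powr (1 - a) - 1) / (eta T * (1 - a)) + ln (3 * real K / \<delta>) / (2 * gamma T)
      + (1 / (2 * a) + 1 / 2) * ln (3 / \<delta>) + bonus a eta gamma Act H"
proof -
  have "0 < gamma T" using gamma_pos assms(3) by simp
  have "regret Act loss b H \<le> (real K powr (1 - a) - 1) / (eta T * (1 - a)) + ln (3 * real K / \<delta>) / (2 * gamma T)
      + (1 / (2 * a) + 1 / 2) * ln (3 / \<delta>) + bonus a eta gamma Act H" if "b < K" for b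
  proof -
    have "path_sum (ix_gap stab_weight) H \<le> ln (3 / \<delta>)"
      "path_sum (ix_gap explore_weight) H \<le> ln (3 / \<delta>)"
      "path_sum (ix_gap (comparator_weight T b)) H \<le> ln (3 * real K / \<delta>)"
      using assms(4) that unfolding ix_deviation_def by (meson lessThan_iff nle_le)+
    then have "path_sum (ix_gap stab_weight) H / (2 * a) \<le> ln (3 / \<delta>) / (2 * a)"
      "path_sum (ix_gap (comparator_weight T b)) H / (2 * gamma T) \<le> ln (3 * real K / \<delta>) / (2 * gamma T)"
      using a_pos \<open>0 < gamma T\<close> by (auto intro!: divide_right_mono)
    with regret_le_ix_gaps[OF assms(1-3) that] \<open>path_sum (ix_gap explore_weight) H \<le> ln (3 / \<delta>)\<close>
    show ?thesis
      by (simp add: algebra_simps add_divide_distrib)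
  qed
  then show ?thesis
    using K_pos by (subst Max_le_iff) (auto simp: lessThan_empty_iff)
qed

end

theorem theoremD1:
  fixes K T :: nat and \<alpha> \<delta> :: real and eta gamma :: "nat \<Rightarrow> real"
    and Act :: "nat list \<Rightarrow> nat set" and loss :: "nat list \<Rightarrow> nat \<Rightarrow> real"
  assumes "K \<ge> 2" and "T \<ge> 1" and "0 < \<alpha>" and "\<alpha> < 1" and "0 < \<delta>" and "\<delta> < 1"
    and "\<forall>t\<ge>1. 0 < eta t" and "\<forall>t\<ge>1. 0 < gamma t"
    and "\<forall>t\<ge>1. eta (Suc t) \<le> eta t" and "\<forall>t\<ge>1. gamma (Suc t) \<le> gamma t"
    and "\<forall>t\<ge>1. eta t \<le> 2 * gamma t"
    and "\<forall>h. Act h \<subseteq> {..<K} \<and> Act h \<noteq> {}"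
    and "\<forall>h i. i < K \<longrightarrow> 0 \<le> loss h i \<and> loss h i \<le> 1"
  shows "hist_prob K T (ftarl_weight \<alpha> K eta gamma Act loss)
     (\<lambda>H. Max ((\<lambda>a. regret Act loss a H) ` {..<K})
        \<le> (real K powr (1 - \<alpha>) - 1) / (eta T * (1 - \<alpha>))
          + ln (3 * real K / \<delta>) / (2 * gamma T)
          + (1 / (2 * \<alpha>) + 1 / 2) * ln (3 / \<delta>)
          + bonus \<alpha> eta gamma Act H)
    \<ge> 1 - \<delta>"
proof -
  interpret ftarl_run \<alpha> K eta gamma Act loss
    by unfold_locales (use assms in auto)
  show ?thesis
    unfolding ftarl_weight_eq_path_weight
  proof (rule order_trans[OF _ hist_prob_mono[where P = "\<lambda>H. \<not> ix_deviation \<delta> T H"]])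
    have "hist_prob K T (path_weight p_at) (\<lambda>H. \<not> ix_deviation \<delta> T H)
        = 1 - hist_prob K T (path_weight p_at) (ix_deviation \<delta> T)"
      by (rule hist_prob_not) (rule sum_path_weight[OF sum_p_at])
    then show "1 - \<delta> \<le> hist_prob K T (path_weight p_at) (\<lambda>H. \<not> ix_deviation \<delta> T H)"
      using hist_prob_ix_deviation_le[where T = T, OF \<open>0 < \<delta>\<close>] by linarith
  qed (use path_weight_p_at_nonneg max_regret_le assms(2)
      admissible_if_path_weight_nonzero[of Act p_at, OF p_at_inactive] in auto)
qed

end
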